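(* Let $B$ be a unital $C^*$-algebra with a $*$-isomorphism $\psi:B\to M_n\otimes B$ satisfying $\psi(1)=I_n\otimes1$, let $A$ be a maximal abelian $*$-subalgebra of $B$, and let $\phi:A\to\mathbb{C}$ be a unital algebra homomorphism extended to a positive contraction $\phi:B\to\mathbb{C}$. Then for every $c\in C$ and $\epsilon>0$ there is $m\ge1$ such that $\|\kappa_m(\phi_m(c))-c\|<\epsilon$.
   Context: $M_n=M_n(\mathbb{C})$, identity $I_n$. Define $\psi_0=\mathrm{id}_B$, $\psi_{m+1}=(\mathrm{id}^{\otimes m}\otimes\psi)\circ\psi_m:B\to M_n^{\otimes(m+1)}\otimes B$. Define $\kappa_m:M_n^{\otimes m}\to B$ by $\kappa_m(x)=\psi_m^{-1}(x\otimes1)$ and let $C$ be the norm closure of $\bigcup_{m\ge1}\kappa_m(M_n^{\otimes m})$. For $m\ge1$, $\phi_m=(\mathrm{id}^{\otimes m}\otimes\phi)\circ\psi_m:B\to M_n^{\otimes m}$. *)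

theory Defs
  imports "HOL-Analysis.Analysis"
begin

class unital_cstar_algebra = real_normed_algebra_1 + banach +
  fixes cs_scale :: "complex \<Rightarrow> 'a \<Rightarrow> 'a"
    and cs_star :: "'a \<Rightarrow> 'a"
  assumes cs_scale_of_real: "cs_scale (complex_of_real r) x = scaleR r x"
    and cs_scale_add_right: "cs_scale a (x + y) = cs_scale a x + cs_scale a y"
    and cs_scale_add_left: "cs_scale (a + b) x = cs_scale a x + cs_scale b x"
    and cs_scale_scale: "cs_scale a (cs_scale b x) = cs_scale (a * b) x"
    and norm_cs_scale: "norm (cs_scale a x) = cmod a * norm x"
    and cs_scale_mult_left: "cs_scale a (x * y) = cs_scale a x * y"
    and cs_scale_mult_right: "cs_scale a (x * y) = x * cs_scale a y"
    and cs_star_star: "cs_star (cs_star x) = x"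
    and cs_star_add: "cs_star (x + y) = cs_star x + cs_star y"
    and cs_star_mult: "cs_star (x * y) = cs_star y * cs_star x"
    and cs_star_scale: "cs_star (cs_scale a x) = cs_scale (cnj a) (cs_star x)"
    and cstar_identity: "norm (cs_star x * x) = (norm x)\<^sup>2"

text \<open>An element of \<open>M_n^{\<otimes>m} \<otimes> X\<close> is represented as a matrix indexed by
  multi-indices (lists of length m with entries < n), i.e. a function
  \<open>nat list \<Rightarrow> nat list \<Rightarrow> X\<close> vanishing outside these index sets.
  Tensor factors are ordered left to right, the last list position being the
  rightmost M_n factor.\<close>

definition multi_idx :: "nat \<Rightarrow> nat \<Rightarrow> nat list set" where
  "multi_idx n m = {is. length is = m \<and> set is \<subseteq> {..<n}}"

definition tmats :: "nat \<Rightarrow> nat \<Rightarrow> (nat list \<Rightarrow> nat list \<Rightarrow> 'x::zero) set" where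
  "tmats n m = {x. \<forall>is js. x is js \<noteq> 0 \<longrightarrow> is \<in> multi_idx n m \<and> js \<in> multi_idx n m}"

text \<open>M_n(X) = M_n \<otimes> X as zero-padded functions nat \<Rightarrow> nat \<Rightarrow> X.\<close>
definition mats :: "nat \<Rightarrow> (nat \<Rightarrow> nat \<Rightarrow> 'x::zero) set" where
  "mats n = {x. \<forall>i j. x i j \<noteq> 0 \<longrightarrow> i < n \<and> j < n}"

definition star_iso_Mn :: "nat \<Rightarrow> ('b::unital_cstar_algebra \<Rightarrow> nat \<Rightarrow> nat \<Rightarrow> 'b) \<Rightarrow> bool" where
  "star_iso_Mn n \<psi> \<longleftrightarrow>
     bij_betw \<psi> UNIV (mats n) \<and>
     (\<forall>x y i j. \<psi> (x + y) i j = \<psi> x i j + \<psi> y i j) \<and>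
     (\<forall>a x i j. \<psi> (cs_scale a x) i j = cs_scale a (\<psi> x i j)) \<and>
     (\<forall>x y i j. \<psi> (x * y) i j = (\<Sum>k<n. \<psi> x i k * \<psi> y k j)) \<and>
     (\<forall>x i j. \<psi> (cs_star x) i j = cs_star (\<psi> x j i))"

text \<open>\<open>\<psi>_0 = id\<close>, \<open>\<psi>_{m+1} = (id^{\<otimes>m} \<otimes> \<psi>) \<circ> \<psi>_m\<close>.\<close>
fun psi_pow :: "('b::unital_cstar_algebra \<Rightarrow> nat \<Rightarrow> nat \<Rightarrow> 'b) \<Rightarrow> nat \<Rightarrow> 'b \<Rightarrow> nat list \<Rightarrow> nat list \<Rightarrow> 'b" where
  "psi_pow \<psi> 0 b is js = (if is = [] \<and> js = [] then b else 0)"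
| "psi_pow \<psi> (Suc m) b is js =
     (if length is = Suc m \<and> length js = Suc m
      then \<psi> (psi_pow \<psi> m b (butlast is) (butlast js)) (last is) (last js) else 0)"

text \<open>\<open>\<kappa>_m(x) = \<psi>_m^{-1}(x \<otimes> 1)\<close> for \<open>x \<in> M_n^{\<otimes>m}\<close>.\<close>
definition kappa :: "('b::unital_cstar_algebra \<Rightarrow> nat \<Rightarrow> nat \<Rightarrow> 'b) \<Rightarrow> nat \<Rightarrow> (nat list \<Rightarrow> nat list \<Rightarrow> complex) \<Rightarrow> 'b" where
  "kappa \<psi> m x = inv_into UNIV (psi_pow \<psi> m) (\<lambda>is js. cs_scale (x is js) 1)"

definition Calg :: "nat \<Rightarrow> ('b::unital_cstar_algebra \<Rightarrow> nat \<Rightarrow> nat \<Rightarrow> 'b) \<Rightarrow> 'b set" where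
  "Calg n \<psi> = closure (\<Union>m\<in>{1..}. kappa \<psi> m ` tmats n m)"

text \<open>\<open>\<phi>_m = (id^{\<otimes>m} \<otimes> \<phi>) \<circ> \<psi>_m\<close>.\<close>
definition phi_pow :: "('b::unital_cstar_algebra \<Rightarrow> nat \<Rightarrow> nat \<Rightarrow> 'b) \<Rightarrow> ('b \<Rightarrow> complex) \<Rightarrow> nat \<Rightarrow> 'b \<Rightarrow> nat list \<Rightarrow> nat list \<Rightarrow> complex" where
  "phi_pow \<psi> \<phi> m b = (\<lambda>is js. \<phi> (psi_pow \<psi> m b is js))"

definition star_subalgebra :: "'b::unital_cstar_algebra set \<Rightarrow> bool" where
  "star_subalgebra S \<longleftrightarrow> 0 \<in> S \<and>
     (\<forall>x\<in>S. \<forall>y\<in>S. x + y \<in> S \<and> x * y \<in> S) \<and>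
     (\<forall>a. \<forall>x\<in>S. cs_scale a x \<in> S) \<and> (\<forall>x\<in>S. cs_star x \<in> S)"

definition abelian :: "'b::unital_cstar_algebra set \<Rightarrow> bool" where
  "abelian S \<longleftrightarrow> (\<forall>x\<in>S. \<forall>y\<in>S. x * y = y * x)"

definition maximal_abelian_star_subalgebra :: "'b::unital_cstar_algebra set \<Rightarrow> bool" where
  "maximal_abelian_star_subalgebra A \<longleftrightarrow> star_subalgebra A \<and> abelian A \<and>
     (\<forall>S. star_subalgebra S \<and> abelian S \<and> A \<subseteq> S \<longrightarrow> S = A)"

text \<open>Positive elements of a C*-algebra are exactly those of the form \<open>x^* x\<close>.\<close>
definition positive_contraction :: "('b::unital_cstar_algebra \<Rightarrow> complex) \<Rightarrow> bool" where
  "positive_contraction \<phi> \<longleftrightarrow>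
     (\<forall>x y. \<phi> (x + y) = \<phi> x + \<phi> y) \<and> (\<forall>a x. \<phi> (cs_scale a x) = a * \<phi> x) \<and>
     (\<forall>x. \<phi> (cs_star x * x) \<in> \<real> \<and> Re (\<phi> (cs_star x * x)) \<ge> 0) \<and>
     (\<forall>x. cmod (\<phi> x) \<le> norm x)"

definition unital_hom_on :: "'b::unital_cstar_algebra set \<Rightarrow> ('b \<Rightarrow> complex) \<Rightarrow> bool" where
  "unital_hom_on A \<phi> \<longleftrightarrow> \<phi> 1 = 1 \<and>
     (\<forall>x\<in>A. \<forall>y\<in>A. \<phi> (x + y) = \<phi> x + \<phi> y \<and> \<phi> (x * y) = \<phi> x * \<phi> y) \<and>
     (\<forall>a. \<forall>x\<in>A. \<phi> (cs_scale a x) = a * \<phi> x)"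

end

(*
  Write E_m for the map d |-> kappa_m (phi_m d). It is linear, and it fixes kappa_m (M_n^(m)) because
  phi 1 = 1. If the E_m are bounded uniformly in m, then for c in C one picks c' = kappa_m x close
  to c and gets |E_m c - c| <= |E_m (c - c')| + |c' - c|, which is small.

  The uniform bound |E_m| <= 4 uses only positivity of phi. For complex vectors zeta, eta indexed
  by multi-indices, <zeta, phi_m(d) eta> = Omega (u_zeta^* d u_eta), where u_zeta is kappa_m of the
  matrix with zeta as one column, so |u_zeta| <= |zeta|, and Omega x = phi (psi_m(x) at a diagonal
  position) is a positive unital functional. Such functionals satisfy |Omega x| <= 4 |x|, using
  square roots of 1 - h and 1 + h for selfadjoint h of norm < 1, given by the binomial series.
  Hence phi_m(d) has operator norm at most 4 |d|. This bound passes to kappa_m (phi_m d) through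
  the C*-identity: for y = kappa_m X one has |y|^(2^(j+1)) = |(y^* y)^(2^j)|, which is at most
  N^2 times the 2^j-th power of the squared operator norm (N = n^m, entrywise estimate), and the
  factor N^2 disappears as j tends to infinity.
*)

theory Submission
  imports Defs "HOL-Computational_Algebra.Formal_Power_Series"
begin

section \<open>Arithmetic in unital C*-algebras\<close>

lemma cs_scale_zero_left [simp]: "cs_scale 0 x = 0" for x :: "'a::unital_cstar_algebra"
  using cs_scale_of_real[of 0 x] by simp

lemma cs_scale_one_left [simp]: "cs_scale 1 x = x" for x :: "'a::unital_cstar_algebra"
  using cs_scale_of_real[of 1 x] by simp

lemma cs_scale_zero_right [simp]: "cs_scale a (0::'a::unital_cstar_algebra) = 0"
  using cs_scale_add_right[of a 0 0] by simp

lemma cs_scale_minus_right: "cs_scale a (- x) = - cs_scale a x" for x :: "'a::unital_cstar_algebra"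
  using cs_scale_add_right[of a x "- x"] by (simp add: add_eq_0_iff)

lemma cs_scale_minus_left: "cs_scale (- a) x = - cs_scale a x" for x :: "'a::unital_cstar_algebra"
  using cs_scale_add_left[of a "- a" x] by (simp add: add_eq_0_iff)

lemma cs_scale_diff_left: "cs_scale (a - b) x = cs_scale a x - cs_scale b x"
  for x :: "'a::unital_cstar_algebra"
  using cs_scale_add_left[of "a - b" b x] by (simp add: eq_diff_eq)

lemma cs_scale_sum_left: "cs_scale (sum f S) x = (\<Sum>i\<in>S. cs_scale (f i) x)"
  for x :: "'a::unital_cstar_algebra"
  by (induct S rule: infinite_finite_induct) (simp_all add: cs_scale_add_left)

lemma cs_scale_1_mult: "cs_scale a 1 * x = cs_scale a x" for x :: "'a::unital_cstar_algebra"
  using cs_scale_mult_left[of a 1 x] by simp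

lemma mult_cs_scale_1: "x * cs_scale a 1 = cs_scale a x" for x :: "'a::unital_cstar_algebra"
  using cs_scale_mult_right[of a x 1] by simp

lemma cs_star_zero [simp]: "cs_star (0::'a::unital_cstar_algebra) = 0"
  using cs_star_add[of 0 0] by simp

lemma cs_star_minus: "cs_star (- x) = - cs_star x" for x :: "'a::unital_cstar_algebra"
  using cs_star_add[of x "- x"] by (simp add: add_eq_0_iff)

lemma cs_star_diff: "cs_star (x - y) = cs_star x - cs_star y" for x :: "'a::unital_cstar_algebra"
  using cs_star_add[of x "- y"] by (simp add: cs_star_minus)

lemma cs_star_one [simp]: "cs_star (1::'a::unital_cstar_algebra) = 1"
  using cs_star_mult[of 1 "cs_star 1 :: 'a"] by (simp add: cs_star_star)

lemma cs_star_scaleR: "cs_star (scaleR r x) = scaleR r (cs_star x)"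
  for x :: "'a::unital_cstar_algebra"
  using cs_star_scale[of "complex_of_real r" x] by (simp add: cs_scale_of_real)

lemma cs_star_power: "cs_star (x ^ k) = cs_star x ^ k" for x :: "'a::unital_cstar_algebra"
  by (induct k) (simp_all add: cs_star_mult power_commutes)

lemma norm_cs_star [simp]: "norm (cs_star x) = norm x" for x :: "'a::unital_cstar_algebra"
proof -
  have le: "norm y \<le> norm (cs_star y)" for y :: 'a
  proof (cases "y = 0")
    case False
    have "norm y * norm y = norm (cs_star y * y)" by (simp add: cstar_identity power2_eq_square)
    also have "\<dots> \<le> norm (cs_star y) * norm y" by (rule norm_mult_ineq)
    finally show ?thesis using False by simp
  qed simp
  show ?thesis using le[of x] le[of "cs_star x"] by (simp add: cs_star_star)
qed

lemma bounded_linear_cs_star: "bounded_linear (cs_star :: 'a::unital_cstar_algebra \<Rightarrow> 'a)"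
  by (rule bounded_linear_intro[of _ 1]) (simp_all add: cs_star_add cs_star_scaleR)

lemma norm_power_two_power_selfadjoint:
  fixes h :: "'a::unital_cstar_algebra"
  assumes "cs_star h = h"
  shows "norm (h ^ (2 ^ k)) = norm h ^ (2 ^ k)"
proof (induct k)
  case (Suc k)
  have "h ^ (2 ^ Suc k) = cs_star (h ^ (2 ^ k)) * h ^ (2 ^ k)"
    using assms by (simp add: cs_star_power power_add[symmetric] mult_2)
  then have "norm (h ^ (2 ^ Suc k)) = norm (h ^ (2 ^ k)) ^ 2" by (simp add: cstar_identity)
  also have "\<dots> = norm h ^ (2 ^ Suc k)" using Suc by (simp add: power_mult[symmetric] mult.commute)
  finally show ?case .
qed simp

section \<open>Positive unital functionals\<close>

text \<open>Coefficients of the binomial series of \<open>\<surd>(1 - t)\<close>.\<close>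

definition sqrt_series_coeff :: "nat \<Rightarrow> real" where
  "sqrt_series_coeff k = (-1) ^ k * ((1/2) gchoose k)"

lemma abs_gbinomial_half_le_1: "\<bar>(1/2::real) gchoose k\<bar> \<le> 1"
proof (induct k)
  case (Suc k)
  have "(1/2::real) gchoose Suc k = ((1/2 - of_nat k) / of_nat (Suc k)) * ((1/2) gchoose k)"
    using gbinomial_mult_1[of "1/2::real" k] by (simp add: field_simps)
  moreover have "\<bar>(1/2 - of_nat k) / of_nat (Suc k)\<bar> \<le> (1::real)"
    by (simp add: divide_le_eq_1 abs_le_iff)
  moreover have "\<bar>1/2 - of_nat k\<bar> * \<bar>(1/2::real) gchoose k\<bar> \<le> (1 + of_nat k) * 1"
    using Suc by (intro mult_mono) (simp_all add: abs_le_iff)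
  ultimately show ?case by (simp add: abs_mult divide_le_eq)
qed simp

lemma abs_sqrt_series_coeff_le_1: "\<bar>sqrt_series_coeff k\<bar> \<le> 1"
  using abs_gbinomial_half_le_1[of k] by (simp add: sqrt_series_coeff_def abs_mult)

lemma sqrt_series_coeff_convolution:
  "(\<Sum>i\<le>k. sqrt_series_coeff i * sqrt_series_coeff (k - i)) = (if k = 0 then 1 else if k = 1 then -1 else 0)"
proof -
  have "(\<Sum>i\<le>k. sqrt_series_coeff i * sqrt_series_coeff (k - i))
      = (-1) ^ k * (\<Sum>i\<le>k. ((1/2::real) gchoose i) * ((1/2) gchoose (k - i)))"
    unfolding sum_distrib_left
  proof (rule sum.cong)
    fix i assume "i \<in> {..k}"
    then have "(-1::real) ^ i * (-1) ^ (k - i) = (-1) ^ k" by (simp add: power_add[symmetric])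
    then show "sqrt_series_coeff i * sqrt_series_coeff (k - i)
        = (-1) ^ k * (((1/2::real) gchoose i) * ((1/2) gchoose (k - i)))"
      unfolding sqrt_series_coeff_def by (metis (no_types, lifting) mult.assoc mult.left_commute)
  qed simp
  also have "\<dots> = (-1) ^ k * ((1/2 + 1/2::real) gchoose k)"
    by (simp add: gbinomial_Vandermonde atMost_atLeast0)
  also have "\<dots> = (-1) ^ k * of_nat (1 choose k)"
    using binomial_gbinomial[of 1 k, where 'a=real] by simp
  also have "\<dots> = (if k = 0 then 1 else if k = 1 then -1 else 0)"
    by (cases k) (auto simp: binomial_eq_0)
  finally show ?thesis .
qed

lemma selfadjoint_sqrt_one_minus:
  fixes h :: "'a::unital_cstar_algebra"
  assumes "cs_star h = h" and "norm h < 1"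
  shows "\<exists>v. cs_star v * v = 1 - h"
proof -
  define a where "a k = scaleR (sqrt_series_coeff k) (h ^ k)" for k
  have bound: "norm (a k) \<le> norm h ^ k" for k
  proof -
    have "norm (a k) = \<bar>sqrt_series_coeff k\<bar> * norm (h ^ k)" by (simp add: a_def)
    also have "\<dots> \<le> 1 * norm h ^ k"
      using abs_sqrt_series_coeff_le_1[of k] norm_power_ineq[of h k] by (intro mult_mono) auto
    finally show ?thesis by simp
  qed
  have summable: "summable (\<lambda>k. norm (a k))"
    by (rule summable_comparison_test[of _ "\<lambda>k. norm h ^ k"])
      (use bound assms(2) in \<open>auto intro!: summable_geometric\<close>)
  define v where "v = suminf a"
  have "(\<Sum>i\<le>k. a i * a (k - i))
      = scaleR (\<Sum>i\<le>k. sqrt_series_coeff i * sqrt_series_coeff (k - i)) (h ^ k)" for k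
    unfolding scaleR_sum_left
  proof (rule sum.cong)
    fix i assume "i \<in> {..k}"
    then have "h ^ i * h ^ (k - i) = h ^ k" by (simp add: power_add[symmetric])
    then show "a i * a (k - i) = scaleR (sqrt_series_coeff i * sqrt_series_coeff (k - i)) (h ^ k)"
      by (simp add: a_def)
  qed simp
  then have "(\<lambda>k. \<Sum>i\<le>k. a i * a (k - i)) = (\<lambda>k. (if k = 0 then 1 else 0) + (if k = 1 then - h else 0))"
    by (simp add: sqrt_series_coeff_convolution fun_eq_iff)
  moreover have "(\<lambda>k. \<Sum>i\<le>k. a i * a (k - i)) sums (v * v)"
    unfolding v_def by (rule Cauchy_product_sums[OF summable summable])
  moreover have "(\<lambda>k. (if k = 0 then 1 else 0) + (if k = 1 then - h else 0)) sums (1 + - h)"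
    by (intro sums_add sums_single)
  ultimately have "v * v = 1 - h" using sums_unique2 by fastforce
  moreover have "cs_star v = v"
  proof -
    have "cs_star v = (\<Sum>k. cs_star (a k))"
      unfolding v_def by (rule bounded_linear.suminf[OF bounded_linear_cs_star summable_norm_cancel[OF summable]])
    also have "\<dots> = v"
      unfolding v_def a_def by (simp add: cs_star_scaleR cs_star_power assms(1))
    finally show ?thesis .
  qed
  ultimately show ?thesis by metis
qed

lemma cartesian_decomposition:
  fixes x :: "'a::unital_cstar_algebra"
  obtains h k where "cs_star h = h" "cs_star k = k" "x = h + cs_scale \<i> k"
    "norm h \<le> norm x" "norm k \<le> norm x"
proof
  let ?h = "scaleR (1/2) (x + cs_star x)" and ?k = "cs_scale (- \<i>/2) (x - cs_star x)"
  show "cs_star ?h = ?h"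
    by (simp add: cs_star_scaleR cs_star_add cs_star_star add.commute)
  have "cs_star ?k = cs_scale (\<i>/2) (cs_star x - x)"
    by (simp add: cs_star_scale cs_star_diff cs_star_star)
  also have "\<dots> = cs_scale (- (\<i>/2)) (x - cs_star x)"
    using cs_scale_minus_right[of "\<i>/2" "x - cs_star x"] cs_scale_minus_left[of "\<i>/2" "x - cs_star x"]
    by simp
  finally show "cs_star ?k = ?k" by simp
  have "cs_scale \<i> ?k = scaleR (1/2) (x - cs_star x)"
    using cs_scale_of_real[of "1/2" "x - cs_star x"] by (simp add: cs_scale_scale)
  then show "x = ?h + cs_scale \<i> ?k" by (simp add: scaleR_add_right[symmetric] scaleR_2)
  show "norm ?h \<le> norm x" using norm_triangle_ineq[of x "cs_star x"] by simp
  show "norm ?k \<le> norm x"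
    using norm_triangle_ineq4[of x "cs_star x"] by (simp add: norm_cs_scale norm_divide)
qed

locale positive_unital_functional =
  fixes \<Omega> :: "'a::unital_cstar_algebra \<Rightarrow> complex"
  assumes additive: "\<Omega> (x + y) = \<Omega> x + \<Omega> y"
    and homogeneous: "\<Omega> (cs_scale a x) = a * \<Omega> x"
    and positive_real: "\<Omega> (cs_star x * x) \<in> \<real>"
    and positive_nonneg: "Re (\<Omega> (cs_star x * x)) \<ge> 0"
    and unital: "\<Omega> 1 = 1"
begin

lemma map_zero: "\<Omega> 0 = 0"
  using additive[of 0 0] by simp

lemma map_diff: "\<Omega> (x - y) = \<Omega> x - \<Omega> y"
  using additive[of "x - y" y] by (simp add: eq_diff_eq)

lemma map_sum: "\<Omega> (sum f S) = (\<Sum>i\<in>S. \<Omega> (f i))"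
  by (induct S rule: infinite_finite_induct) (simp_all add: map_zero additive)

lemma map_scaleR: "\<Omega> (scaleR r x) = of_real r * \<Omega> x"
  using homogeneous[of "complex_of_real r" x] by (simp add: cs_scale_of_real)

lemma norm_selfadjoint_le_1:
  assumes "cs_star h = h" "norm h < 1"
  shows "cmod (\<Omega> h) \<le> 1"
proof -
  obtain v w where "cs_star v * v = 1 - h" "cs_star w * w = 1 - (- h)"
    using selfadjoint_sqrt_one_minus[of h] selfadjoint_sqrt_one_minus[of "- h"] assms
    by (auto simp: cs_star_minus)
  then have "1 - \<Omega> h \<in> \<real>" "Re (1 - \<Omega> h) \<ge> 0" "Re (1 + \<Omega> h) \<ge> 0"
    using positive_real[of v] positive_nonneg[of v] positive_nonneg[of w]
    by (simp_all add: map_diff additive unital)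
  moreover from this(1) have "\<Omega> h \<in> \<real>" using Reals_diff[OF Reals_1, of "1 - \<Omega> h"] by simp
  ultimately show ?thesis by (auto elim!: Reals_cases)
qed

lemma norm_selfadjoint_le:
  assumes "cs_star h = h"
  shows "cmod (\<Omega> h) \<le> 2 * norm h"
proof (cases "h = 0")
  case False
  let ?h = "scaleR (1 / (2 * norm h)) h"
  have "cmod (\<Omega> ?h) \<le> 1"
    using False assms by (intro norm_selfadjoint_le_1) (simp_all add: cs_star_scaleR)
  then show ?thesis using False by (simp add: map_scaleR norm_divide divide_le_eq)
qed (simp add: map_zero)

lemma norm_le_4_norm: "cmod (\<Omega> x) \<le> 4 * norm x"
proof -
  obtain h k where hk: "cs_star h = h" "cs_star k = k" "x = h + cs_scale \<i> k"
    "norm h \<le> norm x" "norm k \<le> norm x"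
    by (rule cartesian_decomposition)
  have "cmod (\<Omega> x) \<le> cmod (\<Omega> h) + cmod (\<Omega> k)"
    using norm_triangle_ineq[of "\<Omega> h" "\<i> * \<Omega> k"] by (simp add: hk(3) additive homogeneous norm_mult)
  also have "\<dots> \<le> 4 * norm x"
    using norm_selfadjoint_le[OF hk(1)] norm_selfadjoint_le[OF hk(2)] hk(4,5) by simp
  finally show ?thesis .
qed

end

section \<open>Matrices over a finite index set\<close>

definition mats_on :: "'i set \<Rightarrow> ('i \<Rightarrow> 'i \<Rightarrow> 'x::zero) set" where
  "mats_on T = {X. \<forall>I J. X I J \<noteq> 0 \<longrightarrow> I \<in> T \<and> J \<in> T}"

lemma mats_onI: "(\<And>I J. I \<notin> T \<or> J \<notin> T \<Longrightarrow> X I J = 0) \<Longrightarrow> X \<in> mats_on T"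
  by (auto simp: mats_on_def)

lemma mats_onD: "X \<in> mats_on T \<Longrightarrow> I \<notin> T \<or> J \<notin> T \<Longrightarrow> X I J = 0"
  by (auto simp: mats_on_def)

definition mat_mult :: "'i set \<Rightarrow> ('i \<Rightarrow> 'i \<Rightarrow> complex) \<Rightarrow> ('i \<Rightarrow> 'i \<Rightarrow> complex) \<Rightarrow> 'i \<Rightarrow> 'i \<Rightarrow> complex"
  where "mat_mult T X Y = (\<lambda>I J. \<Sum>K\<in>T. X I K * Y K J)"

definition mat_adj :: "('i \<Rightarrow> 'i \<Rightarrow> complex) \<Rightarrow> 'i \<Rightarrow> 'i \<Rightarrow> complex" where
  "mat_adj X = (\<lambda>I J. cnj (X J I))"

definition mat_id :: "'i set \<Rightarrow> 'i \<Rightarrow> 'i \<Rightarrow> complex" where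
  "mat_id T = (\<lambda>I J. if I = J \<and> I \<in> T then 1 else 0)"

primrec mat_pow :: "'i set \<Rightarrow> ('i \<Rightarrow> 'i \<Rightarrow> complex) \<Rightarrow> nat \<Rightarrow> 'i \<Rightarrow> 'i \<Rightarrow> complex" where
  "mat_pow T X 0 = mat_id T"
| "mat_pow T X (Suc k) = mat_mult T X (mat_pow T X k)"

definition mat_unit :: "'i \<Rightarrow> 'i \<Rightarrow> 'i \<Rightarrow> 'i \<Rightarrow> complex" where
  "mat_unit A B = (\<lambda>I J. if I = A \<and> J = B then 1 else 0)"

definition mat_vec :: "'i set \<Rightarrow> ('i \<Rightarrow> 'i \<Rightarrow> complex) \<Rightarrow> ('i \<Rightarrow> complex) \<Rightarrow> 'i \<Rightarrow> complex" where
  "mat_vec T X \<eta> = (\<lambda>I. \<Sum>J\<in>T. X I J * \<eta> J)"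

definition vec_inner :: "'i set \<Rightarrow> ('i \<Rightarrow> complex) \<Rightarrow> ('i \<Rightarrow> complex) \<Rightarrow> complex" where
  "vec_inner T \<zeta> \<eta> = (\<Sum>I\<in>T. cnj (\<zeta> I) * \<eta> I)"

definition vec_norm2 :: "'i set \<Rightarrow> ('i \<Rightarrow> complex) \<Rightarrow> real" where
  "vec_norm2 T \<eta> = (\<Sum>I\<in>T. (cmod (\<eta> I))\<^sup>2)"

definition form_bounded :: "'i set \<Rightarrow> ('i \<Rightarrow> 'i \<Rightarrow> complex) \<Rightarrow> real \<Rightarrow> bool" where
  "form_bounded T X c \<longleftrightarrow>
     (\<forall>\<zeta> \<eta>. cmod (vec_inner T \<zeta> (mat_vec T X \<eta>)) \<le> c * sqrt (vec_norm2 T \<zeta>) * sqrt (vec_norm2 T \<eta>))"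

definition sq_norm_bounded :: "'i set \<Rightarrow> ('i \<Rightarrow> 'i \<Rightarrow> complex) \<Rightarrow> real \<Rightarrow> bool" where
  "sq_norm_bounded T X s \<longleftrightarrow> (\<forall>\<eta>. vec_norm2 T (mat_vec T X \<eta>) \<le> s * vec_norm2 T \<eta>)"

lemma mat_mult_mats_on: "X \<in> mats_on T \<Longrightarrow> Y \<in> mats_on T \<Longrightarrow> mat_mult T X Y \<in> mats_on T"
  by (rule mats_onI) (auto simp: mat_mult_def mats_onD)

lemma mat_adj_mats_on: "X \<in> mats_on T \<Longrightarrow> mat_adj X \<in> mats_on T"
  by (rule mats_onI) (auto simp: mat_adj_def mats_onD)

lemma mat_id_mats_on: "mat_id T \<in> mats_on T"
  by (rule mats_onI) (auto simp: mat_id_def)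

lemma mat_pow_mats_on: "X \<in> mats_on T \<Longrightarrow> mat_pow T X k \<in> mats_on T"
  by (induct k) (simp_all add: mat_id_mats_on mat_mult_mats_on)

lemma mat_unit_mats_on: "A \<in> T \<Longrightarrow> B \<in> T \<Longrightarrow> mat_unit A B \<in> mats_on T"
  by (rule mats_onI) (auto simp: mat_unit_def)

lemma sum_mat_unit_expansion:
  assumes "finite T" "X \<in> mats_on T"
  shows "(\<Sum>A\<in>T. \<Sum>B\<in>T. X A B * mat_unit A B I J) = X I J"
proof (cases "I \<in> T \<and> J \<in> T")
  case True
  have "(\<Sum>B\<in>T. X A B * mat_unit A B I J) = (if A = I then X A J else 0)" for A
    using True assms(1) by (simp add: mat_unit_def if_distrib[of "\<lambda>z. X A _ * z"] sum.delta cong: if_cong)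
  then show ?thesis using True assms(1) by (simp add: sum.delta)
next
  case False
  then show ?thesis using assms(2) by (auto simp: mat_unit_def mats_onD intro!: sum.neutral)
qed

lemma mat_mult_adj_unit:
  assumes "finite T" "A \<in> T"
  shows "mat_mult T (mat_adj (mat_unit A B)) (mat_unit A B) = mat_unit B B"
proof -
  have "mat_mult T (mat_adj (mat_unit A B)) (mat_unit A B) I J = (\<Sum>K\<in>T. if K = A then mat_unit B B I J else 0)"
    for I J unfolding mat_mult_def mat_adj_def by (rule sum.cong) (auto simp: mat_unit_def)
  then show ?thesis using assms by (simp add: fun_eq_iff)
qed

lemma mat_adj_unit_diag: "mat_adj (mat_unit B B) = mat_unit B B"
  by (auto simp: mat_adj_def mat_unit_def fun_eq_iff)

lemma vec_norm2_nonneg: "vec_norm2 T \<eta> \<ge> 0"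
  by (simp add: vec_norm2_def sum_nonneg)

lemma vec_inner_self: "vec_inner T \<zeta> \<zeta> = of_real (vec_norm2 T \<zeta>)"
  unfolding vec_inner_def vec_norm2_def of_real_sum
  by (rule sum.cong) (simp_all add: complex_norm_square[simplified] mult.commute)

lemma form_bounded_mat_adj:
  assumes "form_bounded T X c"
  shows "form_bounded T (mat_adj X) c"
  unfolding form_bounded_def
proof (intro allI)
  fix \<zeta> \<eta>
  have "vec_inner T \<zeta> (mat_vec T (mat_adj X) \<eta>) = (\<Sum>I\<in>T. \<Sum>J\<in>T. cnj (\<zeta> I) * cnj (X J I) * \<eta> J)"
    by (simp add: vec_inner_def mat_vec_def mat_adj_def sum_distrib_left mult.assoc)
  also have "\<dots> = cnj (vec_inner T \<eta> (mat_vec T X \<zeta>))"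
    by (subst sum.swap) (simp add: vec_inner_def mat_vec_def sum_distrib_left mult_ac)
  finally have "cmod (vec_inner T \<zeta> (mat_vec T (mat_adj X) \<eta>)) = cmod (vec_inner T \<eta> (mat_vec T X \<zeta>))"
    by simp
  also have "\<dots> \<le> c * sqrt (vec_norm2 T \<eta>) * sqrt (vec_norm2 T \<zeta>)"
    using assms by (simp add: form_bounded_def)
  finally show "cmod (vec_inner T \<zeta> (mat_vec T (mat_adj X) \<eta>)) \<le> c * sqrt (vec_norm2 T \<zeta>) * sqrt (vec_norm2 T \<eta>)"
    by (simp add: mult_ac)
qed

lemma form_bounded_imp_sq_norm_bounded:
  assumes "form_bounded T X c"
  shows "sq_norm_bounded T X (c\<^sup>2)"
  unfolding sq_norm_bounded_def
proof
  fix \<eta>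
  let ?a = "sqrt (vec_norm2 T (mat_vec T X \<eta>))" and ?b = "sqrt (vec_norm2 T \<eta>)"
  have "?a * ?a = cmod (vec_inner T (mat_vec T X \<eta>) (mat_vec T X \<eta>))"
    by (simp add: vec_inner_self vec_norm2_nonneg)
  also have "\<dots> \<le> (c * ?b) * ?a"
    using assms[unfolded form_bounded_def, rule_format, of "mat_vec T X \<eta>" \<eta>] by (simp add: mult_ac)
  finally have le: "?a * ?a \<le> (c * ?b) * ?a" .
  have "?a\<^sup>2 \<le> (c * ?b)\<^sup>2"
  proof (cases "?a = 0")
    case False
    then have "?a > 0" using vec_norm2_nonneg[of T "mat_vec T X \<eta>"] by simp
    then have "?a \<le> c * ?b" using le by (rule mult_right_le_imp_le[rotated])
    then show ?thesis using \<open>?a > 0\<close> by (intro power_mono) simp_all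
  qed simp
  then show "vec_norm2 T (mat_vec T X \<eta>) \<le> c\<^sup>2 * vec_norm2 T \<eta>"
    by (simp add: power_mult_distrib vec_norm2_nonneg)
qed

lemma mat_vec_mat_mult:
  assumes "finite T"
  shows "mat_vec T (mat_mult T X Y) \<eta> = mat_vec T X (mat_vec T Y \<eta>)"
proof
  fix I
  have "mat_vec T (mat_mult T X Y) \<eta> I = (\<Sum>J\<in>T. \<Sum>K\<in>T. X I K * Y K J * \<eta> J)"
    by (simp add: mat_vec_def mat_mult_def sum_distrib_right)
  also have "\<dots> = mat_vec T X (mat_vec T Y \<eta>) I"
    by (subst sum.swap) (simp add: mat_vec_def sum_distrib_left mult.assoc)
  finally show "mat_vec T (mat_mult T X Y) \<eta> I = mat_vec T X (mat_vec T Y \<eta>) I" .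
qed

lemma sq_norm_bounded_mat_mult:
  assumes "finite T" "sq_norm_bounded T X s" "sq_norm_bounded T Y t" "s \<ge> 0"
  shows "sq_norm_bounded T (mat_mult T X Y) (s * t)"
  unfolding sq_norm_bounded_def
proof
  fix \<eta>
  have "vec_norm2 T (mat_vec T (mat_mult T X Y) \<eta>) \<le> s * vec_norm2 T (mat_vec T Y \<eta>)"
    using assms(1,2) by (simp add: mat_vec_mat_mult sq_norm_bounded_def)
  also have "\<dots> \<le> s * (t * vec_norm2 T \<eta>)"
    using assms(3,4) by (simp add: sq_norm_bounded_def mult_left_mono)
  finally show "vec_norm2 T (mat_vec T (mat_mult T X Y) \<eta>) \<le> s * t * vec_norm2 T \<eta>"
    by (simp add: mult.assoc)
qed

lemma mat_vec_mat_id: "finite T \<Longrightarrow> I \<in> T \<Longrightarrow> mat_vec T (mat_id T) \<eta> I = \<eta> I"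
  by (simp add: mat_vec_def mat_id_def if_distrib[of "\<lambda>x. x * _"] cong: if_cong)

lemma sq_norm_bounded_mat_pow:
  assumes "finite T" "sq_norm_bounded T X s" "s \<ge> 0"
  shows "sq_norm_bounded T (mat_pow T X k) (s ^ k)"
proof (induct k)
  case 0
  then show ?case
    using assms(1) by (simp add: sq_norm_bounded_def vec_norm2_def mat_vec_mat_id)
next
  case (Suc k)
  then show ?case using sq_norm_bounded_mat_mult[OF assms(1,2) Suc assms(3)] by simp
qed

lemma sq_norm_bounded_entry:
  assumes "finite T" "sq_norm_bounded T X s" "I \<in> T" "J \<in> T"
  shows "(cmod (X I J))\<^sup>2 \<le> s"
proof -
  define \<delta> where "\<delta> = (\<lambda>K. if K = J then 1 else 0 :: complex)"
  have sq: "(cmod (\<delta> K))\<^sup>2 = (if K = J then 1 else 0)" for K by (simp add: \<delta>_def)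
  have "(cmod (X I J))\<^sup>2 = (cmod (mat_vec T X \<delta> I))\<^sup>2"
    using assms(1,4) by (simp add: mat_vec_def \<delta>_def if_distrib cong: if_cong)
  also have "\<dots> \<le> vec_norm2 T (mat_vec T X \<delta>)"
    unfolding vec_norm2_def by (rule member_le_sum) (simp_all add: assms)
  also have "\<dots> \<le> s * vec_norm2 T \<delta>"
    using assms(2) by (simp add: sq_norm_bounded_def)
  also have "vec_norm2 T \<delta> = 1"
    unfolding vec_norm2_def sq by (subst sum.delta[OF assms(1)]) (simp add: assms(4))
  finally show ?thesis by simp
qed

lemma le_if_dyadic_powers_bounded:
  fixes a b C :: real
  assumes "a \<ge> 0" "b \<ge> 0" "\<And>j. a ^ (2 ^ Suc j) \<le> C * b ^ (2 ^ Suc j)"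
  shows "a \<le> b"
proof (rule ccontr)
  assume "\<not> a \<le> b"
  then have ab: "a > b" by simp
  show False
  proof (cases "b = 0")
    case True
    then show False using assms(3)[of 0] ab by simp
  next
    case False
    then have "b > 0" using assms(2) by simp
    have "a / b > 1" using ab \<open>b > 0\<close> by simp
    then obtain k where k: "C < (a / b) ^ k" using real_arch_pow by blast
    have "k \<le> 2 ^ Suc k" by (rule less_imp_le_nat[OF Suc_lessD[OF less_exp]])
    then have "(a / b) ^ k \<le> (a / b) ^ (2 ^ Suc k)"
      using \<open>a / b > 1\<close> by (intro power_increasing) simp_all
    also have "\<dots> \<le> C"
      using assms(3)[of k] \<open>b > 0\<close> by (simp add: power_divide divide_le_eq)
    finally show False using k by simp
  qed
qed

section \<open>Unital *-isomorphisms between \<open>B\<close> and \<open>M\<^sub>T(B)\<close>\<close>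

locale matrix_rep =
  fixes T :: "'i set" and P :: "'b::unital_cstar_algebra \<Rightarrow> 'i \<Rightarrow> 'i \<Rightarrow> 'b"
  assumes finite_idx: "finite T" and idx_nonempty: "T \<noteq> {}"
    and rep_bij: "bij_betw P UNIV (mats_on T)"
    and rep_add: "\<And>x y I J. P (x + y) I J = P x I J + P y I J"
    and rep_scale: "\<And>a x I J. P (cs_scale a x) I J = cs_scale a (P x I J)"
    and rep_mult: "\<And>x y I J. P (x * y) I J = (\<Sum>K\<in>T. P x I K * P y K J)"
    and rep_star: "\<And>x I J. P (cs_star x) I J = cs_star (P x J I)"
    and rep_one: "\<And>I J. P 1 I J = (if I = J \<and> I \<in> T then 1 else 0)"
begin

lemma rep_inject: "(\<And>I J. P x I J = P y I J) \<Longrightarrow> x = y"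
  using rep_bij unfolding bij_betw_def inj_def by blast

lemma rep_outside: "I \<notin> T \<or> J \<notin> T \<Longrightarrow> P x I J = 0"
  using rep_bij mats_onD[of "P x" T I J] by (auto simp: bij_betw_def)

lemma rep_zero: "P 0 I J = 0"
  using rep_add[of 0 0 I J] by simp

lemma rep_diff: "P (x - y) I J = P x I J - P y I J"
  using rep_add[of "x - y" y I J] by (simp add: eq_diff_eq)

lemma rep_sum: "P (sum f S) I J = (\<Sum>i\<in>S. P (f i) I J)"
  by (induct S rule: infinite_finite_induct) (simp_all add: rep_zero rep_add)

definition embed :: "('i \<Rightarrow> 'i \<Rightarrow> complex) \<Rightarrow> 'b" where
  "embed X = inv_into UNIV P (\<lambda>I J. cs_scale (X I J) 1)"

lemma rep_embed:
  assumes "X \<in> mats_on T"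
  shows "P (embed X) I J = cs_scale (X I J) 1"
proof -
  have "(\<lambda>I J. cs_scale (X I J) 1) \<in> mats_on T"
    by (rule mats_onI) (simp add: mats_onD[OF assms])
  then have "(\<lambda>I J. cs_scale (X I J) 1) \<in> range P"
    using rep_bij by (simp add: bij_betw_def)
  then show ?thesis unfolding embed_def by (simp add: f_inv_into_f)
qed

lemma embed_eqI: "X \<in> mats_on T \<Longrightarrow> (\<And>I J. P y I J = cs_scale (X I J) 1) \<Longrightarrow> embed X = y"
  by (rule rep_inject) (simp add: rep_embed)

lemma embed_mult:
  assumes "X \<in> mats_on T" "Y \<in> mats_on T"
  shows "embed X * embed Y = embed (mat_mult T X Y)"
  by (rule sym, rule embed_eqI[OF mat_mult_mats_on[OF assms]])
    (simp add: rep_mult rep_embed assms cs_scale_1_mult cs_scale_scale mat_mult_def cs_scale_sum_left)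

lemma embed_adj: "X \<in> mats_on T \<Longrightarrow> cs_star (embed X) = embed (mat_adj X)"
  by (rule sym, rule embed_eqI[OF mat_adj_mats_on])
    (simp_all add: rep_star rep_embed cs_star_scale mat_adj_def)

lemma embed_id: "embed (mat_id T) = 1"
  by (rule embed_eqI[OF mat_id_mats_on]) (auto simp: rep_one mat_id_def)

lemma embed_pow: "X \<in> mats_on T \<Longrightarrow> embed X ^ k = embed (mat_pow T X k)"
  by (induct k) (simp_all add: embed_id embed_mult mat_pow_mats_on)

lemma embed_diff:
  assumes "X \<in> mats_on T" "Y \<in> mats_on T"
  shows "embed (\<lambda>I J. X I J - Y I J) = embed X - embed Y"
  by (rule embed_eqI)
    (use assms in \<open>auto intro!: mats_onI simp: mats_onD rep_diff rep_embed cs_scale_diff_left\<close>)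

lemma embed_scale:
  assumes "X \<in> mats_on T"
  shows "embed (\<lambda>I J. c * X I J) = cs_scale c (embed X)"
  by (rule embed_eqI)
    (use assms in \<open>auto intro!: mats_onI simp: mats_onD rep_scale rep_embed cs_scale_scale\<close>)

lemma embed_eq_sum_units:
  assumes "X \<in> mats_on T"
  shows "embed X = (\<Sum>A\<in>T. \<Sum>B\<in>T. cs_scale (X A B) (embed (mat_unit A B)))"
proof (rule embed_eqI[OF assms])
  fix I J
  have "P (\<Sum>A\<in>T. \<Sum>B\<in>T. cs_scale (X A B) (embed (mat_unit A B))) I J
      = cs_scale (\<Sum>A\<in>T. \<Sum>B\<in>T. X A B * mat_unit A B I J) 1"
    by (simp add: rep_sum rep_scale rep_embed mat_unit_mats_on cs_scale_scale cs_scale_sum_left)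
  then show "P (\<Sum>A\<in>T. \<Sum>B\<in>T. cs_scale (X A B) (embed (mat_unit A B))) I J = cs_scale (X I J) 1"
    by (simp add: sum_mat_unit_expansion finite_idx assms)
qed

lemma norm_embed_unit_le_1:
  assumes "A \<in> T" "B \<in> T"
  shows "norm (embed (mat_unit A B)) \<le> 1"
proof -
  let ?e = "embed (mat_unit A B)" and ?f = "embed (mat_unit B B)"
  have "cs_star ?f * ?f = ?f"
    using mat_mult_adj_unit[OF finite_idx assms(2), of B] assms
    by (simp add: embed_adj embed_mult mat_unit_mats_on mat_adj_mats_on mat_adj_unit_diag)
  then have "norm ?f \<le> 1" using cstar_identity[of ?f] by (auto simp: power2_eq_square)
  moreover have "cs_star ?e * ?e = ?f"
    using mat_mult_adj_unit[OF finite_idx assms(1), of B] assms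
    by (simp add: embed_adj embed_mult mat_unit_mats_on mat_adj_mats_on)
  ultimately have "(norm ?e)\<^sup>2 \<le> 1\<^sup>2" using cstar_identity[of ?e] by simp
  then show ?thesis by (rule power2_le_imp_le) simp
qed

lemma norm_embed_le_entry_bound:
  assumes "X \<in> mats_on T" "\<And>A B. A \<in> T \<Longrightarrow> B \<in> T \<Longrightarrow> cmod (X A B) \<le> r"
  shows "norm (embed X) \<le> real (card T) * real (card T) * r"
proof -
  have "norm (embed X) \<le> (\<Sum>A\<in>T. \<Sum>B\<in>T. norm (cs_scale (X A B) (embed (mat_unit A B))))"
    unfolding embed_eq_sum_units[OF assms(1)]
    by (rule order_trans[OF norm_sum sum_mono]) (rule norm_sum)
  also have "\<dots> \<le> (\<Sum>A\<in>T. \<Sum>B\<in>T. r)"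
  proof (intro sum_mono)
    fix A B assume "A \<in> T" "B \<in> T"
    then have "cmod (X A B) * norm (embed (mat_unit A B)) \<le> r * 1"
      using assms(2) norm_embed_unit_le_1 by (intro mult_mono) (auto intro: order_trans[OF norm_ge_zero])
    then show "norm (cs_scale (X A B) (embed (mat_unit A B))) \<le> r" by (simp add: norm_cs_scale)
  qed
  finally show ?thesis by simp
qed

lemma norm_embed_adj_mult_pow_le:
  assumes "X \<in> mats_on T" "form_bounded T X c"
  shows "norm ((cs_star (embed X) * embed X) ^ k) \<le> real (card T) * real (card T) * (c\<^sup>2) ^ k"
proof -
  let ?H = "mat_mult T (mat_adj X) X"
  have H: "?H \<in> mats_on T" by (simp add: mat_mult_mats_on mat_adj_mats_on assms(1))
  have "sq_norm_bounded T ?H (c\<^sup>2 * c\<^sup>2)"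
    using form_bounded_imp_sq_norm_bounded[OF form_bounded_mat_adj[OF assms(2)]]
      form_bounded_imp_sq_norm_bounded[OF assms(2)]
    by (rule sq_norm_bounded_mat_mult[OF finite_idx]) simp
  then have pow: "sq_norm_bounded T (mat_pow T ?H k) ((c\<^sup>2 * c\<^sup>2) ^ k)"
    by (rule sq_norm_bounded_mat_pow[OF finite_idx]) simp
  have sq: "(c\<^sup>2 * c\<^sup>2) ^ k = ((c\<^sup>2) ^ k)\<^sup>2"
    by (metis power2_eq_square power_mult_distrib)
  have "cmod (mat_pow T ?H k A B) \<le> (c\<^sup>2) ^ k" if "A \<in> T" "B \<in> T" for A B
  proof (rule power2_le_imp_le)
    show "(cmod (mat_pow T ?H k A B))\<^sup>2 \<le> ((c\<^sup>2) ^ k)\<^sup>2"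
      using sq_norm_bounded_entry[OF finite_idx pow that] by (simp only: sq)
  qed simp
  moreover have "(cs_star (embed X) * embed X) ^ k = embed (mat_pow T ?H k)"
    by (simp add: embed_adj embed_mult embed_pow mat_adj_mats_on H assms(1))
  ultimately show ?thesis by (simp add: norm_embed_le_entry_bound mat_pow_mats_on H)
qed

lemma norm_embed_le_if_form_bounded:
  assumes "X \<in> mats_on T" "form_bounded T X c" "c \<ge> 0"
  shows "norm (embed X) \<le> c"
proof (rule le_if_dyadic_powers_bounded[where C = "real (card T) * real (card T)"])
  fix j
  let ?y = "embed X"
  have "cs_star (cs_star ?y * ?y) = cs_star ?y * ?y" by (simp add: cs_star_mult cs_star_star)
  then have "norm ((cs_star ?y * ?y) ^ (2 ^ j)) = (norm ?y ^ 2) ^ (2 ^ j)"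
    by (simp add: norm_power_two_power_selfadjoint cstar_identity)
  then have "norm ?y ^ (2 ^ Suc j) = norm ((cs_star ?y * ?y) ^ (2 ^ j))"
    by (simp add: power_mult[symmetric])
  also have "\<dots> \<le> real (card T) * real (card T) * (c\<^sup>2) ^ (2 ^ j)"
    by (rule norm_embed_adj_mult_pow_le[OF assms(1,2)])
  also have "(c\<^sup>2) ^ (2 ^ j) = c ^ (2 ^ Suc j)"
    by (simp add: power_mult[symmetric])
  finally show "norm ?y ^ (2 ^ Suc j) \<le> real (card T) * real (card T) * c ^ (2 ^ Suc j)" .
qed (simp_all add: assms(3))

end

locale matrix_rep_state = matrix_rep T P + positive_unital_functional \<phi>
  for T :: "'i set" and P :: "'b::unital_cstar_algebra \<Rightarrow> 'i \<Rightarrow> 'i \<Rightarrow> 'b" and \<phi> :: "'b \<Rightarrow> complex"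
begin

definition state_entries :: "'b \<Rightarrow> 'i \<Rightarrow> 'i \<Rightarrow> complex" where
  "state_entries d = (\<lambda>I J. \<phi> (P d I J))"

definition expect :: "'b \<Rightarrow> 'b" where
  "expect d = embed (state_entries d)"

lemma state_entries_mats_on: "state_entries d \<in> mats_on T"
  by (rule mats_onI) (simp add: state_entries_def rep_outside map_zero)

lemma expect_diff: "expect (x - y) = expect x - expect y"
  by (simp add: expect_def state_entries_def rep_diff map_diff embed_diff[symmetric]
      state_entries_mats_on[unfolded state_entries_def])

lemma expect_embed: "X \<in> mats_on T \<Longrightarrow> expect (embed X) = embed X"
  by (simp add: expect_def state_entries_def rep_embed homogeneous unital)

definition base_idx :: 'i where
  "base_idx = (SOME I. I \<in> T)"

lemma base_idx_in: "base_idx \<in> T"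
  unfolding base_idx_def using idx_nonempty by (simp add: some_in_eq)

definition corner :: "'b \<Rightarrow> complex" where
  "corner x = \<phi> (P x base_idx base_idx)"

lemma positive_unital_functional_corner: "positive_unital_functional corner"
proof
  fix x
  have "corner (cs_star x * x) = (\<Sum>K\<in>T. \<phi> (cs_star (P x K base_idx) * P x K base_idx))"
    by (simp add: corner_def rep_mult rep_star map_sum)
  then show "corner (cs_star x * x) \<in> \<real>" "Re (corner (cs_star x * x)) \<ge> 0"
    using positive_real positive_nonneg by (auto simp: Re_sum intro: sum_nonneg)
qed (simp_all add: corner_def rep_add additive rep_scale homogeneous rep_one base_idx_in unital)

definition column :: "('i \<Rightarrow> complex) \<Rightarrow> 'i \<Rightarrow> 'i \<Rightarrow> complex" where
  "column \<zeta> = (\<lambda>I J. if I \<in> T \<and> J = base_idx then \<zeta> I else 0)"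

lemma column_mats_on: "column \<zeta> \<in> mats_on T"
  by (rule mats_onI) (auto simp: column_def base_idx_in)

lemma mat_adj_column_mult_column:
  "mat_mult T (mat_adj (column \<zeta>)) (column \<zeta>) = (\<lambda>I J. of_real (vec_norm2 T \<zeta>) * mat_unit base_idx base_idx I J)"
proof (intro ext)
  fix I J
  show "mat_mult T (mat_adj (column \<zeta>)) (column \<zeta>) I J = of_real (vec_norm2 T \<zeta>) * mat_unit base_idx base_idx I J"
  proof (cases "I = base_idx \<and> J = base_idx")
    case True
    then have "mat_mult T (mat_adj (column \<zeta>)) (column \<zeta>) I J = vec_inner T \<zeta> \<zeta>"
      unfolding mat_mult_def mat_adj_def column_def vec_inner_def by (intro sum.cong) auto
    then show ?thesis using True by (simp add: vec_inner_self mat_unit_def)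
  next
    case False
    then have "mat_mult T (mat_adj (column \<zeta>)) (column \<zeta>) I J = 0"
      unfolding mat_mult_def mat_adj_def column_def by (intro sum.neutral) auto
    then show ?thesis using False by (auto simp: mat_unit_def)
  qed
qed

lemma norm_embed_column_le: "norm (embed (column \<zeta>)) \<le> sqrt (vec_norm2 T \<zeta>)"
proof -
  let ?u = "embed (column \<zeta>)"
  have "cs_star ?u * ?u = cs_scale (of_real (vec_norm2 T \<zeta>)) (embed (mat_unit base_idx base_idx))"
    by (simp add: embed_adj embed_mult column_mats_on mat_adj_mats_on mat_adj_column_mult_column
        embed_scale mat_unit_mats_on base_idx_in)
  then have "(norm ?u)\<^sup>2 = vec_norm2 T \<zeta> * norm (embed (mat_unit base_idx base_idx))"
    using cstar_identity[of ?u] vec_norm2_nonneg[of T \<zeta>] by (simp add: norm_cs_scale)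
  also have "\<dots> \<le> vec_norm2 T \<zeta>"
    using norm_embed_unit_le_1[OF base_idx_in base_idx_in] vec_norm2_nonneg[of T \<zeta>]
    by (simp add: mult_left_le)
  finally show ?thesis by (rule real_le_rsqrt)
qed

lemma vec_inner_state_entries:
  "vec_inner T \<zeta> (mat_vec T (state_entries d) \<eta>) = corner (cs_star (embed (column \<zeta>)) * d * embed (column \<eta>))"
proof -
  let ?u = "embed (column \<zeta>)" and ?w = "embed (column \<eta>)"
  have u: "P (cs_star ?u) base_idx L = cs_scale (cnj (\<zeta> L)) 1" if "L \<in> T" for L
    unfolding rep_star rep_embed[OF column_mats_on] using that by (simp add: column_def cs_star_scale)
  have w: "P ?w K base_idx = cs_scale (\<eta> K) 1" if "K \<in> T" for K
    unfolding rep_embed[OF column_mats_on] using that by (simp add: column_def)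
  have "P (cs_star ?u * d * ?w) base_idx base_idx
      = (\<Sum>K\<in>T. \<Sum>L\<in>T. P (cs_star ?u) base_idx L * P d L K * P ?w K base_idx)"
    by (simp add: rep_mult sum_distrib_right)
  also have "\<dots> = (\<Sum>K\<in>T. \<Sum>L\<in>T. cs_scale (cnj (\<zeta> L) * \<eta> K) (P d L K))"
    by (intro sum.cong refl)
      (simp add: u w cs_scale_1_mult mult_cs_scale_1 cs_scale_scale mult.commute)
  finally have "corner (cs_star ?u * d * ?w) = (\<Sum>K\<in>T. \<Sum>L\<in>T. cnj (\<zeta> L) * \<eta> K * \<phi> (P d L K))"
    by (simp add: corner_def map_sum homogeneous)
  also have "\<dots> = vec_inner T \<zeta> (mat_vec T (state_entries d) \<eta>)"
    by (subst sum.swap) (simp add: vec_inner_def mat_vec_def state_entries_def sum_distrib_left mult_ac)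
  finally show ?thesis by simp
qed

lemma form_bounded_state_entries: "form_bounded T (state_entries d) (4 * norm d)"
  unfolding form_bounded_def
proof (intro allI)
  fix \<zeta> \<eta>
  let ?u = "embed (column \<zeta>)" and ?w = "embed (column \<eta>)"
  have "cmod (vec_inner T \<zeta> (mat_vec T (state_entries d) \<eta>)) \<le> 4 * norm (cs_star ?u * d * ?w)"
    unfolding vec_inner_state_entries
    by (rule positive_unital_functional.norm_le_4_norm[OF positive_unital_functional_corner])
  also have "norm (cs_star ?u * d * ?w) \<le> norm (cs_star ?u * d) * norm ?w"
    by (rule norm_mult_ineq)
  also have "\<dots> \<le> norm ?u * norm d * norm ?w"
    using norm_mult_ineq[of "cs_star ?u" d] by (intro mult_right_mono) simp_all
  also have "\<dots> \<le> sqrt (vec_norm2 T \<zeta>) * norm d * sqrt (vec_norm2 T \<eta>)"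
    using norm_embed_column_le[of \<zeta>] norm_embed_column_le[of \<eta>]
    by (intro mult_mono) (simp_all add: vec_norm2_nonneg)
  finally show "cmod (vec_inner T \<zeta> (mat_vec T (state_entries d) \<eta>))
      \<le> 4 * norm d * sqrt (vec_norm2 T \<zeta>) * sqrt (vec_norm2 T \<eta>)"
    by (simp add: mult_ac)
qed

lemma norm_expect_le: "norm (expect d) \<le> 4 * norm d"
  unfolding expect_def
  by (rule norm_embed_le_if_form_bounded[OF state_entries_mats_on form_bounded_state_entries]) simp

end

section \<open>The iterated isomorphisms \<open>\<psi>\<^sub>m\<close>\<close>

lemma snoc_in_multi_idx_iff [simp]: "I @ [i] \<in> multi_idx n (Suc m) \<longleftrightarrow> I \<in> multi_idx n m \<and> i < n"
  by (auto simp: multi_idx_def)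

lemma length_multi_idx: "I \<in> multi_idx n m \<Longrightarrow> length I = m"
  by (simp add: multi_idx_def)

lemma finite_multi_idx: "finite (multi_idx n m)"
  using finite_lists_length_eq[OF finite_lessThan[of n], of m] by (simp add: multi_idx_def conj_commute)

lemma multi_idx_nonempty:
  assumes "n > 0"
  shows "multi_idx n m \<noteq> {}"
proof -
  have "replicate m 0 \<in> multi_idx n m" using assms by (auto simp: multi_idx_def)
  then show ?thesis by blast
qed

lemma length_Suc_snocE:
  assumes "length I' = Suc m"
  obtains I i where "I' = I @ [i]" "length I = m"
  using assms by (cases I' rule: rev_exhaust) auto

lemma multi_idx_Suc: "multi_idx n (Suc m) = (\<lambda>(I, i). I @ [i]) ` (multi_idx n m \<times> {..<n})"
proof (intro equalityI subsetI)
  fix I' assume "I' \<in> multi_idx n (Suc m)"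
  moreover from this obtain I i where "I' = I @ [i]"
    by (auto simp: multi_idx_def elim: length_Suc_snocE)
  ultimately show "I' \<in> (\<lambda>(I, i). I @ [i]) ` (multi_idx n m \<times> {..<n})" by auto
qed auto

lemma sum_multi_idx_Suc:
  "(\<Sum>K\<in>multi_idx n (Suc m). f K) = (\<Sum>K\<in>multi_idx n m. \<Sum>k<n. f (K @ [k]))"
proof -
  have "inj_on (\<lambda>(I, i). I @ [i]) (multi_idx n m \<times> {..<n})"
    by (auto simp: inj_on_def)
  then have "(\<Sum>K\<in>multi_idx n (Suc m). f K) = (\<Sum>(K, k)\<in>multi_idx n m \<times> {..<n}. f (K @ [k]))"
    unfolding multi_idx_Suc by (subst sum.reindex) (simp_all add: o_def case_prod_unfold)
  then show ?thesis by (simp add: sum.cartesian_product)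
qed

lemma star_iso_Mn_pos:
  assumes "star_iso_Mn n (\<psi> :: 'b::unital_cstar_algebra \<Rightarrow> nat \<Rightarrow> nat \<Rightarrow> 'b)"
  shows "n > 0"
proof (rule ccontr)
  assume "\<not> n > 0"
  moreover have "\<psi> x \<in> mats n" for x
    using assms by (auto simp: star_iso_Mn_def bij_betw_def)
  ultimately have "\<psi> x = (\<lambda>i j. 0)" for x
    by (auto simp: mats_def fun_eq_iff)
  then have "\<psi> 1 = \<psi> 0" by simp
  then have "(1::'b) = 0" using assms by (simp add: star_iso_Mn_def bij_betw_def inj_eq)
  then show False by simp
qed

lemma matrix_rep_psi_pow_0:
  fixes \<psi> :: "'b::unital_cstar_algebra \<Rightarrow> nat \<Rightarrow> nat \<Rightarrow> 'b"
  shows "matrix_rep (multi_idx n 0) (psi_pow \<psi> 0)"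
proof -
  have "multi_idx n 0 = {[]}" by (auto simp: multi_idx_def)
  moreover have "range (psi_pow \<psi> 0) = mats_on {[]}"
  proof (intro equalityI subsetI)
    fix X :: "nat list \<Rightarrow> nat list \<Rightarrow> 'b" assume "X \<in> mats_on {[]}"
    then have "X = psi_pow \<psi> 0 (X [] [])" by (auto simp: fun_eq_iff mats_onD)
    then show "X \<in> range (psi_pow \<psi> 0)" by blast
  next
    fix X assume "X \<in> range (psi_pow \<psi> 0)"
    then obtain x where "X = psi_pow \<psi> 0 x" by blast
    then show "X \<in> mats_on {[]}" by (simp add: mats_on_def)
  qed
  moreover have "inj (psi_pow \<psi> 0)"
  proof (rule injI)
    fix x y assume "psi_pow \<psi> 0 x = psi_pow \<psi> 0 y"
    then have "psi_pow \<psi> 0 x [] [] = psi_pow \<psi> 0 y [] []" by simp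
    then show "x = y" by simp
  qed
  ultimately show ?thesis by unfold_locales (auto simp: bij_betw_def)
qed

locale psi_pow_step = matrix_rep "multi_idx n m" "psi_pow \<psi> m"
  for n m :: nat and \<psi> :: "'b::unital_cstar_algebra \<Rightarrow> nat \<Rightarrow> nat \<Rightarrow> 'b" +
  assumes iso: "star_iso_Mn n \<psi>"
    and psi_one: "\<And>i j. \<psi> 1 i j = (if i = j \<and> i < n then 1 else 0)"
begin

lemma psi_add: "\<psi> (x + y) i j = \<psi> x i j + \<psi> y i j"
  and psi_scale: "\<psi> (cs_scale a x) i j = cs_scale a (\<psi> x i j)"
  and psi_mult: "\<psi> (x * y) i j = (\<Sum>k<n. \<psi> x i k * \<psi> y k j)"
  and psi_star: "\<psi> (cs_star x) i j = cs_star (\<psi> x j i)"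
  using iso by (simp_all add: star_iso_Mn_def)

lemma psi_zero: "\<psi> 0 i j = 0"
  using psi_add[of 0 0 i j] by simp

lemma psi_sum: "\<psi> (sum f S) i j = (\<Sum>s\<in>S. \<psi> (f s) i j)"
  by (induct S rule: infinite_finite_induct) (simp_all add: psi_zero psi_add)

lemma psi_range: "range \<psi> = mats n"
  using iso by (simp add: star_iso_Mn_def bij_betw_def)

lemma psi_mats: "\<psi> x \<in> mats n"
  using psi_range by blast

lemma psi_inject: "\<psi> x = \<psi> y \<Longrightarrow> x = y"
  using iso by (auto simp: star_iso_Mn_def bij_betw_def inj_def)

lemma psi_pow_Suc_one: "psi_pow \<psi> (Suc m) 1 I' J' = (if I' = J' \<and> I' \<in> multi_idx n (Suc m) then 1 else 0)"
proof (cases "length I' = Suc m \<and> length J' = Suc m")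
  case True
  then obtain I i J j where ij: "I' = I @ [i]" "length I = m" "J' = J @ [j]" "length J = m"
    by (auto elim!: length_Suc_snocE)
  then have "psi_pow \<psi> (Suc m) 1 I' J' = \<psi> (if I = J \<and> I \<in> multi_idx n m then 1 else 0) i j"
    by (simp add: rep_one)
  also have "\<dots> = (if I = J \<and> I \<in> multi_idx n m \<and> i = j \<and> i < n then 1 else 0)"
    by (simp add: psi_one psi_zero) blast
  also have "\<dots> = (if I' = J' \<and> I' \<in> multi_idx n (Suc m) then 1 else 0)"
    using ij(1,3) by auto
  finally show ?thesis .
next
  case False
  then have "psi_pow \<psi> (Suc m) 1 I' J' = 0" by (simp only: psi_pow.simps(2) if_not_P if_False)
  moreover have "\<not> (I' = J' \<and> I' \<in> multi_idx n (Suc m))" using False by (auto simp: multi_idx_def)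
  ultimately show ?thesis by (simp only: if_not_P if_False)
qed

lemma psi_pow_Suc_mult: "psi_pow \<psi> (Suc m) (x * y) I' J' = (\<Sum>K'\<in>multi_idx n (Suc m). psi_pow \<psi> (Suc m) x I' K' * psi_pow \<psi> (Suc m) y K' J')"
proof (cases "length I' = Suc m \<and> length J' = Suc m")
  case True
  then obtain I i J j where ij: "I' = I @ [i]" "length I = m" "J' = J @ [j]" "length J = m"
    by (auto elim!: length_Suc_snocE)
  then have "psi_pow \<psi> (Suc m) (x * y) I' J' = (\<Sum>K\<in>multi_idx n m. \<Sum>k<n. \<psi> (psi_pow \<psi> m x I K) i k * \<psi> (psi_pow \<psi> m y K J) k j)"
    by (simp add: rep_mult psi_sum psi_mult)
  also have "\<dots> = (\<Sum>K\<in>multi_idx n m. \<Sum>k<n. psi_pow \<psi> (Suc m) x I' (K @ [k]) * psi_pow \<psi> (Suc m) y (K @ [k]) J')"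
    using ij by (intro sum.cong refl) (simp add: length_multi_idx)
  finally show ?thesis by (simp add: sum_multi_idx_Suc)
qed auto

lemma psi_pow_Suc_inj: "inj (psi_pow \<psi> (Suc m))"
proof (rule injI)
  fix x y assume eq: "psi_pow \<psi> (Suc m) x = psi_pow \<psi> (Suc m) y"
  have "psi_pow \<psi> m x I J = psi_pow \<psi> m y I J" for I J
  proof (cases "length I = m \<and> length J = m")
    case True
    then have "\<psi> (psi_pow \<psi> m x I J) i j = \<psi> (psi_pow \<psi> m y I J) i j" for i j
      using fun_cong[OF fun_cong[OF eq, of "I @ [i]"], of "J @ [j]"] by simp
    then have "\<psi> (psi_pow \<psi> m x I J) = \<psi> (psi_pow \<psi> m y I J)" by (simp add: fun_eq_iff)
    then show ?thesis by (rule psi_inject)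
  next
    case False
    then have outside: "I \<notin> multi_idx n m \<or> J \<notin> multi_idx n m" by (auto simp: multi_idx_def)
    show ?thesis using rep_outside[OF outside, of x] rep_outside[OF outside, of y] by simp
  qed
  then show "x = y" by (rule rep_inject)
qed

lemma psi_pow_Suc_range: "range (psi_pow \<psi> (Suc m)) = mats_on (multi_idx n (Suc m))"
proof (intro equalityI subsetI)
  fix X assume "X \<in> range (psi_pow \<psi> (Suc m))"
  then obtain x where "X = psi_pow \<psi> (Suc m) x" by blast
  moreover have "psi_pow \<psi> (Suc m) x I' J' = 0" if "I' \<notin> multi_idx n (Suc m) \<or> J' \<notin> multi_idx n (Suc m)" for I' J'
  proof (cases "length I' = Suc m \<and> length J' = Suc m")
    case True
    then obtain I i J j where ij: "I' = I @ [i]" "length I = m" "J' = J @ [j]" "length J = m"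
      by (auto elim!: length_Suc_snocE)
    have "\<psi> (psi_pow \<psi> m x I J) i j = 0"
    proof (cases "I \<in> multi_idx n m \<and> J \<in> multi_idx n m")
      case True
      then have "\<not> (i < n \<and> j < n)" using that ij(1,3) by auto
      then show ?thesis using psi_mats[of "psi_pow \<psi> m x I J"] by (auto simp: mats_def)
    qed (auto simp: rep_outside psi_zero)
    then show ?thesis using ij by simp
  qed auto
  ultimately show "X \<in> mats_on (multi_idx n (Suc m))" by (auto intro: mats_onI)
next
  fix X :: "nat list \<Rightarrow> nat list \<Rightarrow> 'b" assume X: "X \<in> mats_on (multi_idx n (Suc m))"
  let ?blk = "\<lambda>I J i j. X (I @ [i]) (J @ [j])"
  have "X (I @ [i]) (J @ [j]) = 0" if "\<not> (i < n \<and> j < n)" for I J i j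
    using that mats_onD[OF X, of "I @ [i]" "J @ [j]"] by simp
  then have "?blk I J \<in> range \<psi>" for I J
    unfolding psi_range mats_def by blast
  then have blk: "\<psi> (inv_into UNIV \<psi> (?blk I J)) = ?blk I J" for I J
    by (rule f_inv_into_f)
  define Y where "Y I J = (if I \<in> multi_idx n m \<and> J \<in> multi_idx n m then inv_into UNIV \<psi> (?blk I J) else 0)"
    for I J
  have Y_outside: "Y I J = 0" if "\<not> (I \<in> multi_idx n m \<and> J \<in> multi_idx n m)" for I J
    unfolding Y_def using that by (rule if_not_P)
  have "Y \<in> mats_on (multi_idx n m)" by (intro mats_onI Y_outside) blast
  then have "Y \<in> range (psi_pow \<psi> m)" using rep_bij by (simp add: bij_betw_def)
  then obtain b where b: "psi_pow \<psi> m b = Y" by blast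
  have "psi_pow \<psi> (Suc m) b I' J' = X I' J'" for I' J'
  proof (cases "length I' = Suc m \<and> length J' = Suc m")
    case True
    then obtain I i J j where ij: "I' = I @ [i]" "length I = m" "J' = J @ [j]" "length J = m"
      by (auto elim!: length_Suc_snocE)
    then have "psi_pow \<psi> (Suc m) b I' J' = \<psi> (Y I J) i j" using b by simp
    also have "\<dots> = X I' J'"
    proof (cases "I \<in> multi_idx n m \<and> J \<in> multi_idx n m")
      case True
      then show ?thesis using blk ij(1,3) by (simp add: Y_def)
    next
      case False
      then have "Y I J = 0" by (rule Y_outside)
      moreover have "I' \<notin> multi_idx n (Suc m) \<or> J' \<notin> multi_idx n (Suc m)"
        using False ij(1,3) by auto
      ultimately show ?thesis by (simp add: psi_zero mats_onD[OF X])
    qed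
    finally show ?thesis .
  next
    case False
    then have "I' \<notin> multi_idx n (Suc m) \<or> J' \<notin> multi_idx n (Suc m)" by (auto simp: multi_idx_def)
    then show ?thesis using False by (auto simp: mats_onD[OF X])
  qed
  then have "psi_pow \<psi> (Suc m) b = X" by (simp add: fun_eq_iff)
  then show "X \<in> range (psi_pow \<psi> (Suc m))" by blast
qed

lemma matrix_rep_Suc: "matrix_rep (multi_idx n (Suc m)) (psi_pow \<psi> (Suc m))"
proof
  show "finite (multi_idx n (Suc m))" by (rule finite_multi_idx)
  show "multi_idx n (Suc m) \<noteq> {}" using star_iso_Mn_pos[OF iso] by (rule multi_idx_nonempty)
  show "bij_betw (psi_pow \<psi> (Suc m)) UNIV (mats_on (multi_idx n (Suc m)))"
    by (simp add: bij_betw_def psi_pow_Suc_inj psi_pow_Suc_range)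
  show "psi_pow \<psi> (Suc m) 1 I J = (if I = J \<and> I \<in> multi_idx n (Suc m) then 1 else 0)" for I J
    by (rule psi_pow_Suc_one)
  show "psi_pow \<psi> (Suc m) (x * y) I J = (\<Sum>K\<in>multi_idx n (Suc m). psi_pow \<psi> (Suc m) x I K * psi_pow \<psi> (Suc m) y K J)" for x y I J
    by (rule psi_pow_Suc_mult)
qed (simp_all add: rep_add psi_add rep_scale psi_scale rep_star psi_star)

end

lemma matrix_rep_psi_pow:
  assumes "star_iso_Mn n \<psi>" "\<And>i j. \<psi> 1 i j = (if i = j \<and> i < n then 1 else 0)"
  shows "matrix_rep (multi_idx n m) (psi_pow \<psi> m)"
proof (induct m)
  case (Suc m)
  then have "psi_pow_step n m \<psi>"
    using assms by (simp add: psi_pow_step_def psi_pow_step_axioms_def)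
  then show ?case by (rule psi_pow_step.matrix_rep_Suc)
qed (rule matrix_rep_psi_pow_0)

section \<open>Approximation in \<open>C\<close>\<close>

lemma closure_UN_approx_by_fixing_maps:
  fixes E :: "'i \<Rightarrow> 'a::real_normed_vector \<Rightarrow> 'a"
  assumes "c \<in> closure (\<Union>i\<in>M. S i)" "\<epsilon> > 0" "K \<ge> 0"
    and diff: "\<And>i x y. i \<in> M \<Longrightarrow> E i (x - y) = E i x - E i y"
    and bounded: "\<And>i x. i \<in> M \<Longrightarrow> norm (E i x) \<le> K * norm x"
    and fixed: "\<And>i x. i \<in> M \<Longrightarrow> x \<in> S i \<Longrightarrow> E i x = x"
  shows "\<exists>i\<in>M. norm (E i c - c) < \<epsilon>"
proof -
  have "\<epsilon> / (K + 1) > 0" using assms(2,3) by simp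
  then obtain i x where i: "i \<in> M" "x \<in> S i" and close: "dist x c < \<epsilon> / (K + 1)"
    using assms(1) unfolding closure_approachable by blast
  have "norm (E i c - c) = norm (E i (c - x) + (x - c))"
    using diff[OF i(1), of c x] fixed[OF i] by (simp add: algebra_simps)
  also have "\<dots> \<le> norm (E i (c - x)) + norm (x - c)"
    by (rule norm_triangle_ineq)
  also have "\<dots> \<le> K * norm (c - x) + norm (x - c)"
    using bounded[OF i(1), of "c - x"] by simp
  also have "\<dots> = (K + 1) * dist x c"
    by (simp add: dist_norm norm_minus_commute algebra_simps)
  also have "\<dots> < \<epsilon>"
    using close assms(3) by (simp add: pos_less_divide_eq mult.commute)
  finally show ?thesis using i(1) by blast
qed

lemma kappa_phi_pow_eq_expect:
  assumes "matrix_rep_state (multi_idx n m) (psi_pow \<psi> m) \<phi>"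
  shows "kappa \<psi> m (phi_pow \<psi> \<phi> m d) = matrix_rep_state.expect (psi_pow \<psi> m) \<phi> d"
proof -
  interpret matrix_rep_state "multi_idx n m" "psi_pow \<psi> m" \<phi> by (rule assms)
  show ?thesis by (simp add: kappa_def phi_pow_def expect_def embed_def state_entries_def)
qed

lemma positive_unital_functional_if_contraction:
  assumes "positive_contraction \<phi>" "\<phi> 1 = 1"
  shows "positive_unital_functional \<phi>"
  using assms by unfold_locales (auto simp: positive_contraction_def)

context
  fixes n :: nat and \<psi> :: "'b::unital_cstar_algebra \<Rightarrow> nat \<Rightarrow> nat \<Rightarrow> 'b" and \<phi> :: "'b \<Rightarrow> complex"
  assumes iso: "star_iso_Mn n \<psi>"
    and psi_one: "\<And>i j. \<psi> 1 i j = (if i = j \<and> i < n then 1 else 0)"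
    and state: "positive_unital_functional \<phi>"
begin

lemma matrix_rep_state_psi_pow: "matrix_rep_state (multi_idx n m) (psi_pow \<psi> m) \<phi>"
  by (intro matrix_rep_state.intro matrix_rep_psi_pow iso psi_one state)

lemma kappa_phi_pow_diff:
  "kappa \<psi> m (phi_pow \<psi> \<phi> m (x - y)) = kappa \<psi> m (phi_pow \<psi> \<phi> m x) - kappa \<psi> m (phi_pow \<psi> \<phi> m y)"
  using matrix_rep_state.expect_diff[OF matrix_rep_state_psi_pow]
  by (simp add: kappa_phi_pow_eq_expect[OF matrix_rep_state_psi_pow])

lemma norm_kappa_phi_pow_le: "norm (kappa \<psi> m (phi_pow \<psi> \<phi> m d)) \<le> 4 * norm d"
  using matrix_rep_state.norm_expect_le[OF matrix_rep_state_psi_pow]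
  by (simp add: kappa_phi_pow_eq_expect[OF matrix_rep_state_psi_pow])

lemma kappa_phi_pow_kappa:
  assumes "x \<in> tmats n m"
  shows "kappa \<psi> m (phi_pow \<psi> \<phi> m (kappa \<psi> m x)) = kappa \<psi> m x"
proof -
  interpret matrix_rep_state "multi_idx n m" "psi_pow \<psi> m" \<phi> by (rule matrix_rep_state_psi_pow)
  have "kappa \<psi> m x = embed x" by (simp add: kappa_def embed_def)
  moreover have "x \<in> mats_on (multi_idx n m)" using assms by (simp add: tmats_def mats_on_def)
  ultimately show ?thesis
    using expect_embed by (simp add: kappa_phi_pow_eq_expect[OF matrix_rep_state_psi_pow])
qed

end

theorem proposition3p9:
  fixes n :: nat
    and \<psi> :: "'b::unital_cstar_algebra \<Rightarrow> nat \<Rightarrow> nat \<Rightarrow> 'b"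
    and A :: "'b set"
    and \<phi> :: "'b \<Rightarrow> complex"
  assumes "star_iso_Mn n \<psi>"
    and "\<And>i j. \<psi> 1 i j = (if i = j \<and> i < n then 1 else 0)"
    and "maximal_abelian_star_subalgebra A"
    and "unital_hom_on A \<phi>"
    and "positive_contraction \<phi>"
  shows "\<forall>c\<in>Calg n \<psi>. \<forall>\<epsilon>>0. \<exists>m\<ge>1. norm (kappa \<psi> m (phi_pow \<psi> \<phi> m c) - c) < \<epsilon>"
proof (intro ballI allI impI)
  fix c and \<epsilon> :: real
  assume c: "c \<in> Calg n \<psi>" and "\<epsilon> > 0"
  have "\<phi> 1 = 1" using assms(4) by (simp add: unital_hom_on_def)
  with assms(5) have state: "positive_unital_functional \<phi>"
    by (rule positive_unital_functional_if_contraction)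
  have "\<exists>m\<in>{1..}. norm (kappa \<psi> m (phi_pow \<psi> \<phi> m c) - c) < \<epsilon>"
    using c[unfolded Calg_def] \<open>\<epsilon> > 0\<close>
    by (rule closure_UN_approx_by_fixing_maps[where K = 4])
      (auto simp: kappa_phi_pow_diff[OF assms(1,2) state] norm_kappa_phi_pow_le[OF assms(1,2) state]
        kappa_phi_pow_kappa[OF assms(1,2) state])
  then show "\<exists>m\<ge>1. norm (kappa \<psi> m (phi_pow \<psi> \<phi> m c) - c) < \<epsilon>" by auto
qed

end
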